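(* For $i\geq 1$ let $t^e_i = \frac{(2i-1)(2i-1+(-1)^i)}{2}$ be the $i$th even triangular number ($0,6,10,28,\dots$) and $t^o_i = \frac{(2i-1)(2i-1-(-1)^i)}{2}$ the $i$th odd triangular number ($1,3,15,21,\dots$). If $n$ is an even integer, then \[ p(n) = \sum_{i\geq 1} p_2\!\left(\frac{n-t^e_i}{2}\right), \] and if $n$ is an odd integer, then \[ p(n) = \sum_{i\geq 1} p_2\!\left(\frac{n-t^o_i}{2}\right). \]
   Context: $p(m)$ denotes the number of partitions of $m$ (with $p(0)=1$, $p(m)=0$ for $m<0$). A two-color partition of $m$ is a partition of $m$ in which each part size may occur in either of two distinguished colors; $p_2(m)$ is the number of two-color partitions of $m$, i.e. $p_2(m)=\sum_{i=0}^m p(i)p(m-i)$, with $p_2(m)=0$ for $m<0$. Triangular numbers are $k(k+1)/2$, $k\geq 0$. *)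

theory Defs
  imports Main "HOL-Library.Multiset"
begin

definition partitions_of :: "nat \<Rightarrow> nat multiset set" where
  "partitions_of m = {M. (\<forall>x\<in>#M. 0 < x) \<and> sum_mset M = m}"

definition p :: "int \<Rightarrow> nat" where
  "p m = (if m < 0 then 0 else card (partitions_of (nat m)))"

definition p2 :: "int \<Rightarrow> nat" where
  "p2 m = (if m < 0 then 0 else (\<Sum>i = 0..nat m. p (int i) * p (m - int i)))"

definition te :: "nat \<Rightarrow> int" where
  "te i = ((2 * int i - 1) * (2 * int i - 1 + (-1) ^ i)) div 2"

definition to :: "nat \<Rightarrow> int" where
  "to i = ((2 * int i - 1) * (2 * int i - 1 - (-1) ^ i)) div 2"

end

(*
  Let P(q) = sum p(n) q^n = 1/(q;q)_oo. Gauss's identity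
    sum_(k>=0) q^(k(k+1)/2) = (q;q)_oo (-q;q)_oo^2,
  together with (q;q)(-q;q) = (q^2;q^2), turns into P(q) = T(q) P(q^2)^2, where T is the
  series of triangular numbers and P(q^2)^2 = sum p2(m) q^(2m). In the coefficient of q^n a
  triangular number t therefore contributes p2((n - t)/2) exactly when t has the parity of n.
  The triangular numbers come in pairs (k = 2i-2, 2i-1), one even and one odd, and te i and
  to i are the even and the odd member of the i-th pair.

  Power series are only compared up to a fixed degree m, so all infinite products become
  finite ones. Gauss's identity up to degree m follows from the finite Jacobi triple product
    (-q;q)_n prod_(i<n) (1 + q^i) = sum_(-n<=j<=n) [2n, n+j]_q q^(j(j-1)/2),
  an instance of Cauchy's q-binomial theorem, because for large n the Gaussian binomial
  coefficients [2n, n+j]_q with |j| <= m agree with P up to degree m.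
*)

theory Submission
  imports Defs "HOL-Computational_Algebra.Formal_Power_Series"
begin

unbundle fps_syntax

section \<open>Triangular numbers\<close>

text \<open>The triangular number k(k+1)/2 is written \<^term>\<open>Suc k choose 2\<close> throughout.\<close>

lemma Suc_choose_two: "Suc n choose 2 = (n choose 2) + n"
  by (simp add: numeral_2_eq_2)

lemma add_choose_two: "(m + n) choose 2 = (m choose 2) + (n choose 2) + m * n"
  by (induction n) (simp_all add: Suc_choose_two)

lemma double_choose_two: "2 * (n choose 2) + n = n * n"
  by (induction n) (simp_all add: Suc_choose_two algebra_simps)

lemma le_Suc_choose_two: "k \<le> Suc k choose 2"
  by (simp add: Suc_choose_two)

lemma sum_lessThan_eq_choose_two: "(\<Sum>i<n. i) = n choose 2"
  by (induction n) (simp_all add: Suc_choose_two)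

lemma Suc_double_choose_two: "Suc (2 * i) choose 2 = i * Suc (2 * i)"
proof -
  have double: "Suc (2 * i) * (Suc (2 * i) - 1) = 2 * (i * Suc (2 * i))"
    by simp
  show ?thesis
    by (simp only: choose_two double)
qed

lemma Suc_Suc_double_choose_two: "Suc (Suc (2 * i)) choose 2 = Suc (2 * i) * Suc i"
  by (simp only: Suc_choose_two[of "Suc (2 * i)"] Suc_double_choose_two) simp

lemma diff_choose_two_add_mult:
  assumes "k \<le> n"
  shows "((n - k) choose 2) + n * (2 * n - (n - k)) = (n choose 2) + n * n + (Suc k choose 2)"
proof -
  obtain r where n: "n = k + r"
    using assms le_Suc_ex by blast
  have "2 * (k choose 2) + k = k * k"
    by (rule double_choose_two)
  then show ?thesis
    by (simp add: n add_choose_two Suc_choose_two algebra_simps)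
qed

lemma Suc_add_choose_two_add_mult:
  assumes "k < n"
  shows "(Suc (n + k) choose 2) + n * (2 * n - Suc (n + k)) = (n choose 2) + n * n + (Suc k choose 2)"
proof -
  obtain r where n: "n = Suc (k + r)"
    using assms less_imp_Suc_add by blast
  show ?thesis
    by (simp add: n add_choose_two Suc_choose_two algebra_simps)
qed

context comm_monoid_set
begin

lemma lessThan_add:
  fixes m n :: nat
  shows "F g {..<m + n} = F g {..<m} \<^bold>* F (\<lambda>i. g (m + i)) {..<n}"
  by (induction n) (simp_all add: assoc)

end

section \<open>q-Pochhammer symbols and Gaussian binomial coefficients\<close>

definition q_pochhammer :: "'a::comm_ring_1 \<Rightarrow> nat \<Rightarrow> 'a" where
  "q_pochhammer q n = (\<Prod>i\<in>{1..n}. 1 - q ^ i)"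

lemma q_pochhammer_0 [simp]: "q_pochhammer q 0 = 1"
  by (simp add: q_pochhammer_def)

lemma q_pochhammer_Suc: "q_pochhammer q (Suc n) = q_pochhammer q n * (1 - q ^ Suc n)"
  by (simp add: q_pochhammer_def)

definition neg_q_pochhammer :: "'a::comm_ring_1 \<Rightarrow> nat \<Rightarrow> 'a" where
  "neg_q_pochhammer q n = (\<Prod>i\<in>{1..n}. 1 + q ^ i)"

lemma q_pochhammer_mult_neg_q_pochhammer:
  "q_pochhammer q n * neg_q_pochhammer q n = q_pochhammer (q ^ 2) n"
  unfolding q_pochhammer_def neg_q_pochhammer_def prod.distrib[symmetric]
  by (intro prod.cong refl) (simp add: algebra_simps power2_eq_square)

fun gauss_binomial :: "'a::comm_ring_1 \<Rightarrow> nat \<Rightarrow> nat \<Rightarrow> 'a" where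
  "gauss_binomial q 0 k = (if k = 0 then 1 else 0)"
| "gauss_binomial q (Suc n) 0 = 1"
| "gauss_binomial q (Suc n) (Suc k) = gauss_binomial q n (Suc k) + q ^ (n - k) * gauss_binomial q n k"

lemma gauss_binomial_eq_0: "n < k \<Longrightarrow> gauss_binomial q n k = 0"
  by (induction q n k rule: gauss_binomial.induct) auto

lemma gauss_binomial_0_right [simp]: "gauss_binomial q n 0 = 1"
  by (cases n) auto

lemma gauss_binomial_self [simp]: "gauss_binomial q n n = 1"
  by (induction n) (auto simp: gauss_binomial_eq_0)

lemma gauss_binomial_mult_q_pochhammer:
  "k \<le> n \<Longrightarrow> gauss_binomial q n k * q_pochhammer q k * q_pochhammer q (n - k) = q_pochhammer q n"
proof (induction n arbitrary: k)
  case (Suc n)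
  show ?case
  proof (cases "k = 0 \<or> k = Suc n")
    case False
    with Suc.prems obtain j where j: "k = Suc j" and "j < n"
      by (cases k) auto
    then obtain r where r: "n - j = Suc r" "n - Suc j = r"
      using less_imp_Suc_add by fastforce
    have IH1: "gauss_binomial q n (Suc j) * q_pochhammer q (Suc j) * q_pochhammer q r = q_pochhammer q n"
      using Suc.IH[of "Suc j"] \<open>j < n\<close> r by simp
    have IH2: "gauss_binomial q n j * q_pochhammer q j * q_pochhammer q (Suc r) = q_pochhammer q n"
      using Suc.IH[of j] \<open>j < n\<close> r by simp
    have "gauss_binomial q (Suc n) k * q_pochhammer q k * q_pochhammer q (Suc n - k)
        = gauss_binomial q n (Suc j) * q_pochhammer q (Suc j) * q_pochhammer q r * (1 - q ^ Suc r)
          + q ^ Suc r * (gauss_binomial q n j * q_pochhammer q j * q_pochhammer q (Suc r)) * (1 - q ^ Suc j)"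
      by (simp add: j r q_pochhammer_Suc algebra_simps)
    also have "\<dots> = q_pochhammer q n * (1 - q ^ Suc r * q ^ Suc j)"
      unfolding IH1 IH2 by (simp add: algebra_simps)
    also have "q ^ Suc r * q ^ Suc j = q ^ Suc n"
    proof -
      have "Suc r + Suc j = Suc n"
        using r \<open>j < n\<close> by simp
      then show ?thesis
        by (metis power_add)
    qed
    finally show ?thesis by (simp add: q_pochhammer_Suc)
  qed auto
qed simp

lemma prod_q_binomial:
  "(\<Prod>i<n. w + z * q ^ i) =
     (\<Sum>k\<le>n. gauss_binomial q n k * q ^ (k choose 2) * z ^ k * w ^ (n - k))"
proof (induction n)
  case (Suc n)
  define S where "S = (\<Sum>k\<le>n. gauss_binomial q n k * q ^ (k choose 2) * z ^ k * w ^ (n - k))"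
  have A: "w ^ Suc n + (\<Sum>j\<le>n. gauss_binomial q n (Suc j) * q ^ (Suc j choose 2) * z ^ Suc j * w ^ (n - j))
      = w * S"
  proof -
    have "w ^ Suc n + (\<Sum>j\<le>n. gauss_binomial q n (Suc j) * q ^ (Suc j choose 2) * z ^ Suc j * w ^ (n - j))
        = (\<Sum>k\<le>Suc n. gauss_binomial q n k * q ^ (k choose 2) * z ^ k * w ^ (Suc n - k))"
      by (subst sum.atMost_Suc_shift) (simp add: binomial_eq_0)
    also have "\<dots> = (\<Sum>k\<le>n. w * (gauss_binomial q n k * q ^ (k choose 2) * z ^ k * w ^ (n - k)))"
      by (auto simp: gauss_binomial_eq_0 Suc_diff_le intro!: sum.cong)
    also have "\<dots> = w * S"
      by (simp add: S_def sum_distrib_left)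
    finally show ?thesis .
  qed
  have B: "(\<Sum>j\<le>n. q ^ (n - j) * gauss_binomial q n j * q ^ (Suc j choose 2) * z ^ Suc j * w ^ (n - j))
      = z * q ^ n * S"
    unfolding S_def sum_distrib_left
  proof (rule sum.cong)
    fix j assume "j \<in> {..n}"
    then have "q ^ (n - j) * q ^ (Suc j choose 2) = q ^ n * q ^ (j choose 2)"
      by (simp add: Suc_choose_two flip: power_add)
    then show "q ^ (n - j) * gauss_binomial q n j * q ^ (Suc j choose 2) * z ^ Suc j * w ^ (n - j)
        = z * q ^ n * (gauss_binomial q n j * q ^ (j choose 2) * z ^ j * w ^ (n - j))"
      by (simp add: algebra_simps)
  qed simp
  have "(\<Sum>k\<le>Suc n. gauss_binomial q (Suc n) k * q ^ (k choose 2) * z ^ k * w ^ (Suc n - k))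
      = w ^ Suc n + (\<Sum>j\<le>n. gauss_binomial q n (Suc j) * q ^ (Suc j choose 2) * z ^ Suc j * w ^ (n - j))
        + (\<Sum>j\<le>n. q ^ (n - j) * gauss_binomial q n j * q ^ (Suc j choose 2) * z ^ Suc j * w ^ (n - j))"
    by (subst sum.atMost_Suc_shift) (simp add: binomial_eq_0 algebra_simps sum.distrib)
  also have "\<dots> = S * (w + z * q ^ n)"
    unfolding A B by (simp add: algebra_simps)
  finally show ?case
    by (simp only: prod.lessThan_Suc Suc.IH S_def)
qed (simp add: binomial_eq_0)

section \<open>A finite Jacobi triple product\<close>

lemma prod_power_add_power:
  fixes q :: "'a::comm_ring_1"
  shows "(\<Prod>i<2 * n. q ^ n + q ^ i) =
    q ^ ((n choose 2) + n * n) * (neg_q_pochhammer q n * (\<Prod>i<n. 1 + q ^ i))"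
proof -
  have "(\<Prod>i<2 * n. q ^ n + q ^ i) = (\<Prod>i<n. q ^ n + q ^ i) * (\<Prod>i<n. q ^ n + q ^ (n + i))"
    by (simp add: mult_2 prod.lessThan_add)
  also have "(\<Prod>i<n. q ^ n + q ^ i) = (\<Prod>i<n. q ^ i * (1 + q ^ (n - i)))"
    by (intro prod.cong refl) (simp add: algebra_simps flip: power_add)
  also have "\<dots> = q ^ (n choose 2) * (\<Prod>i<n. 1 + q ^ (n - i))"
    by (simp add: prod.distrib sum_lessThan_eq_choose_two flip: power_sum)
  also have "(\<Prod>i<n. 1 + q ^ (n - i)) = neg_q_pochhammer q n"
    unfolding neg_q_pochhammer_def
    by (subst prod.nat_diff_reindex[symmetric]) (simp add: Suc_diff_Suc prod.atLeast1_atMost_eq)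
  also have "(\<Prod>i<n. q ^ n + q ^ (n + i)) = (\<Prod>i<n. q ^ n * (1 + q ^ i))"
    by (simp add: power_add algebra_simps)
  also have "\<dots> = q ^ (n * n) * (\<Prod>i<n. 1 + q ^ i)"
    by (simp add: prod.distrib power_mult)
  finally show ?thesis
    by (simp add: power_add algebra_simps)
qed

lemma sum_gauss_binomial_power_split:
  fixes q :: "'a::comm_ring_1"
  shows "(\<Sum>j\<le>2 * n. gauss_binomial q (2 * n) j * q ^ (j choose 2) * (q ^ n) ^ (2 * n - j)) =
    q ^ ((n choose 2) + n * n) *
      ((\<Sum>k\<le>n. q ^ (Suc k choose 2) * gauss_binomial q (2 * n) (n - k))
     + (\<Sum>k<n. q ^ (Suc k choose 2) * gauss_binomial q (2 * n) (Suc (n + k))))"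
proof -
  define c where "c = (n choose 2) + n * n"
  define f where "f j = gauss_binomial q (2 * n) j * q ^ ((j choose 2) + n * (2 * n - j))" for j
  have lower: "f (n - k) = q ^ c * (q ^ (Suc k choose 2) * gauss_binomial q (2 * n) (n - k))"
    if "k \<le> n" for k
    unfolding f_def diff_choose_two_add_mult[OF that] c_def power_add by (simp only: ac_simps)
  have upper: "f (Suc (n + k)) = q ^ c * (q ^ (Suc k choose 2) * gauss_binomial q (2 * n) (Suc (n + k)))"
    if "k < n" for k
    unfolding f_def Suc_add_choose_two_add_mult[OF that] c_def power_add by (simp only: ac_simps)
  have "(\<Sum>j\<le>2 * n. gauss_binomial q (2 * n) j * q ^ (j choose 2) * (q ^ n) ^ (2 * n - j))
      = (\<Sum>j<Suc n + n. f j)"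
    by (simp add: f_def lessThan_Suc_atMost power_add mult_2 mult.assoc flip: power_mult)
  also have "\<dots> = (\<Sum>k<Suc n. f (n - k)) + (\<Sum>k<n. f (Suc n + k))"
    by (simp only: sum.lessThan_add sum.nat_diff_reindex[of f "Suc n", symmetric] diff_Suc_Suc)
  finally show ?thesis
    by (simp add: lower upper c_def lessThan_Suc_atMost sum_distrib_left distrib_left)
qed

lemma fps_X_power_mult_cancel:
  assumes "fps_X ^ c * f = fps_X ^ c * g"
  shows "f = g"
proof (rule fps_ext)
  fix i
  have "(fps_X ^ c * f) $ (i + c) = (fps_X ^ c * g) $ (i + c)"
    by (simp only: assms)
  then show "f $ i = g $ i"
    by (simp add: fps_X_power_mult_nth)
qed

lemma jacobi_triple_product_finite:
  "neg_q_pochhammer (fps_X :: 'a::comm_ring_1 fps) n * (\<Prod>i<n. 1 + fps_X ^ i) =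
     (\<Sum>k\<le>n. fps_X ^ (Suc k choose 2) * gauss_binomial fps_X (2 * n) (n - k))
   + (\<Sum>k<n. fps_X ^ (Suc k choose 2) * gauss_binomial fps_X (2 * n) (Suc (n + k)))"
proof (rule fps_X_power_mult_cancel)
  define c where "c = (n choose 2) + n * n"
  have "fps_X ^ c * (neg_q_pochhammer fps_X n * (\<Prod>i<n. 1 + fps_X ^ i))
      = (\<Prod>i<2 * n. fps_X ^ n + 1 * (fps_X :: 'a fps) ^ i)"
    unfolding c_def by (simp only: mult_1_left prod_power_add_power)
  also have "\<dots> = (\<Sum>j\<le>2 * n. gauss_binomial fps_X (2 * n) j * fps_X ^ (j choose 2) * 1 ^ j
      * (fps_X ^ n) ^ (2 * n - j))"
    by (rule prod_q_binomial)
  also have "\<dots> = (\<Sum>j\<le>2 * n. gauss_binomial fps_X (2 * n) j * fps_X ^ (j choose 2)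
      * (fps_X ^ n) ^ (2 * n - j))"
    by (simp only: power_one mult_1_right)
  also have "\<dots> = fps_X ^ c *
      ((\<Sum>k\<le>n. fps_X ^ (Suc k choose 2) * gauss_binomial fps_X (2 * n) (n - k))
     + (\<Sum>k<n. fps_X ^ (Suc k choose 2) * gauss_binomial fps_X (2 * n) (Suc (n + k))))"
    unfolding c_def by (rule sum_gauss_binomial_power_split)
  finally show "fps_X ^ c * (neg_q_pochhammer fps_X n * (\<Prod>i<n. 1 + fps_X ^ i)) = \<dots>"
    by (simp only: c_def)
qed

section \<open>Agreement of power series up to a given degree\<close>

definition fps_eq_upto :: "'a::zero fps \<Rightarrow> nat \<Rightarrow> 'a fps \<Rightarrow> bool"  (\<open>(_ \<simeq>[_] _)\<close> [51, 0, 51] 50)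
  where "f \<simeq>[m] g \<longleftrightarrow> (\<forall>i\<le>m. f $ i = g $ i)"

lemma fps_eq_upto_refl [simp]: "f \<simeq>[m] f"
  by (simp add: fps_eq_upto_def)

lemma fps_eq_upto_sym: "f \<simeq>[m] g \<Longrightarrow> g \<simeq>[m] f"
  by (simp add: fps_eq_upto_def)

lemma fps_eq_upto_trans [trans]: "f \<simeq>[m] g \<Longrightarrow> g \<simeq>[m] h \<Longrightarrow> f \<simeq>[m] h"
  by (simp add: fps_eq_upto_def)

lemma fps_eq_upto_add: "f \<simeq>[m] f' \<Longrightarrow> g \<simeq>[m] g' \<Longrightarrow> f + g \<simeq>[m] f' + g'"
  by (simp add: fps_eq_upto_def)

lemma fps_eq_upto_mult:
  fixes f f' g g' :: "'a::comm_semiring_1 fps"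
  assumes "f \<simeq>[m] f'" "g \<simeq>[m] g'"
  shows "f * g \<simeq>[m] f' * g'"
  using assms by (auto simp: fps_eq_upto_def fps_mult_nth intro!: sum.cong)

lemma fps_eq_upto_sum:
  "(\<And>k. k \<in> S \<Longrightarrow> f k \<simeq>[m] g k) \<Longrightarrow> sum f S \<simeq>[m] sum g S"
  by (simp add: fps_eq_upto_def fps_sum_nth)

lemma fps_eq_upto_prod:
  fixes f g :: "'b \<Rightarrow> 'a::comm_semiring_1 fps"
  shows "(\<And>k. k \<in> S \<Longrightarrow> f k \<simeq>[m] g k) \<Longrightarrow> prod f S \<simeq>[m] prod g S"
  by (induction S rule: infinite_finite_induct) (auto intro: fps_eq_upto_mult)

lemma fps_eq_upto_sum_subset:
  assumes "finite B" "A \<subseteq> B" "\<And>k. k \<in> B - A \<Longrightarrow> f k \<simeq>[m] 0"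
  shows "sum f B \<simeq>[m] sum f A"
proof -
  have "sum f (B - A) \<simeq>[m] sum (\<lambda>_. 0) (B - A)"
    using assms(3) by (rule fps_eq_upto_sum)
  then have "sum f (B - A) + sum f A \<simeq>[m] 0 + sum f A"
    by (intro fps_eq_upto_add) simp_all
  then show ?thesis
    using assms(1,2) by (simp add: sum.subset_diff)
qed

lemma fps_eq_upto_prod_subset:
  fixes f :: "'b \<Rightarrow> 'a::comm_semiring_1 fps"
  assumes "finite B" "A \<subseteq> B" "\<And>k. k \<in> B - A \<Longrightarrow> f k \<simeq>[m] 1"
  shows "prod f B \<simeq>[m] prod f A"
proof -
  have "prod f (B - A) \<simeq>[m] prod (\<lambda>_. 1) (B - A)"
    using assms(3) by (rule fps_eq_upto_prod)
  then have "prod f (B - A) * prod f A \<simeq>[m] 1 * prod f A"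
    by (intro fps_eq_upto_mult) simp_all
  then show ?thesis
    using assms(1,2) by (simp add: prod.subset_diff)
qed

lemma fps_X_power_mult_eq_upto_0: "m < e \<Longrightarrow> fps_X ^ e * f \<simeq>[m] 0"
  by (simp add: fps_eq_upto_def fps_X_power_mult_nth)

lemma fps_eq_upto_fps_X_power_mult:
  "(e \<le> m \<Longrightarrow> f \<simeq>[m] g) \<Longrightarrow> fps_X ^ e * f \<simeq>[m] fps_X ^ e * g"
  by (auto simp: fps_eq_upto_def fps_X_power_mult_nth)

lemma fps_eq_upto_cancel_const:
  fixes c :: "'a::idom"
  assumes "c \<noteq> 0" "fps_const c * f \<simeq>[m] fps_const c * g"
  shows "f \<simeq>[m] g"
  using assms by (simp add: fps_eq_upto_def)

lemma fps_compose_fps_X_power_nth: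
  fixes f :: "'a::comm_ring_1 fps"
  assumes "0 < k"
  shows "(f oo fps_X ^ k) $ d = (if k dvd d then f $ (d div k) else 0)"
proof -
  have "(f oo fps_X ^ k) $ d = (\<Sum>i\<in>{0..d}. if i = d div k \<and> k dvd d then f $ i else 0)"
    unfolding fps_compose_nth
    by (intro sum.cong) (use assms in \<open>auto simp flip: power_mult\<close>)
  also have "\<dots> = (if k dvd d then f $ (d div k) else 0)"
    using assms by auto
  finally show ?thesis .
qed

lemma fps_eq_upto_compose_fps_X_power:
  fixes f g :: "'a::comm_ring_1 fps"
  assumes "0 < k" "f \<simeq>[m] g"
  shows "f oo fps_X ^ k \<simeq>[m] g oo fps_X ^ k"
  using assms by (auto simp: fps_eq_upto_def fps_compose_fps_X_power_nth
      intro: order.trans[OF div_le_dividend])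

lemma q_pochhammer_fps_compose:
  fixes a h :: "'a::idom fps"
  assumes "h $ 0 = 0"
  shows "q_pochhammer a n oo h = q_pochhammer (a oo h) n"
  using assms
  by (simp add: q_pochhammer_def fps_compose_prod_distrib fps_compose_sub_distrib fps_compose_power)

section \<open>Partitions\<close>

lemma member_le_sum_mset: "x \<in># M \<Longrightarrow> x \<le> sum_mset (M :: nat multiset)"
  by (induction M) auto

lemma size_le_sum_mset: "(\<forall>x\<in>#M. 0 < x) \<Longrightarrow> size M \<le> sum_mset (M :: nat multiset)"
  by (induction M) auto

lemma finite_partitions_of: "finite (partitions_of m)"
proof (rule finite_subset)
  show "partitions_of m \<subseteq> (\<Union>s\<le>m. multisets_of_size {1..m} s)"
    unfolding partitions_of_def multisets_of_size_def
    using size_le_sum_mset member_le_sum_mset by fastforce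
qed auto

definition bounded_partitions :: "nat \<Rightarrow> nat \<Rightarrow> nat multiset set" where
  "bounded_partitions N m = {M \<in> partitions_of m. \<forall>x\<in>#M. x \<le> N}"

lemma finite_bounded_partitions: "finite (bounded_partitions N m)"
  unfolding bounded_partitions_def using finite_partitions_of by simp

lemma bounded_partitions_eq_partitions_of: "m \<le> N \<Longrightarrow> bounded_partitions N m = partitions_of m"
  unfolding bounded_partitions_def partitions_of_def using member_le_sum_mset by fastforce

lemma bounded_partitions_0: "bounded_partitions 0 m = (if m = 0 then {{#}} else {})"
proof -
  have "M \<in> bounded_partitions 0 m \<longleftrightarrow> M = {#} \<and> m = 0" for M
  proof (cases "M = {#}")
    case False
    then obtain x where "x \<in># M"
      by (meson multiset_nonemptyE)
    with False show ?thesis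
      unfolding bounded_partitions_def partitions_of_def by fastforce
  qed (auto simp: bounded_partitions_def partitions_of_def)
  then show ?thesis
    by auto
qed

lemma card_bounded_partitions_containing:
  "card {M \<in> bounded_partitions (Suc N) m. Suc N \<in># M} =
     (if Suc N \<le> m then card (bounded_partitions (Suc N) (m - Suc N)) else 0)"
  (is "card ?B = _")
proof (cases "Suc N \<le> m")
  case True
  have "bij_betw (add_mset (Suc N)) (bounded_partitions (Suc N) (m - Suc N)) ?B"
  proof (rule bij_betw_byWitness[where f' = "\<lambda>M. M - {#Suc N#}"])
    show "add_mset (Suc N) ` bounded_partitions (Suc N) (m - Suc N) \<subseteq> ?B"
      using True unfolding bounded_partitions_def partitions_of_def by auto
    show "(\<lambda>M. M - {#Suc N#}) ` ?B \<subseteq> bounded_partitions (Suc N) (m - Suc N)"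
      unfolding bounded_partitions_def partitions_of_def
      by (auto dest: in_diffD simp: sum_mset.remove)
  qed auto
  with True show ?thesis
    by (simp add: bij_betw_same_card)
next
  case False
  then have "?B = {}"
    unfolding bounded_partitions_def partitions_of_def using member_le_sum_mset by fastforce
  with False show ?thesis
    by (metis card.empty)
qed

lemma card_bounded_partitions_Suc:
  "card (bounded_partitions (Suc N) m) =
     card (bounded_partitions N m) +
     (if Suc N \<le> m then card (bounded_partitions (Suc N) (m - Suc N)) else 0)"
proof -
  let ?B = "{M \<in> bounded_partitions (Suc N) m. Suc N \<in># M}"
  have "bounded_partitions (Suc N) m = bounded_partitions N m \<union> ?B"
    unfolding bounded_partitions_def by (auto simp: le_Suc_eq)
  then have "card (bounded_partitions (Suc N) m) = card (bounded_partitions N m \<union> ?B)"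
    by (rule arg_cong)
  also have "\<dots> = card (bounded_partitions N m) + card ?B"
    by (rule card_Un_disjoint) (simp_all add: finite_bounded_partitions, auto simp: bounded_partitions_def)
  finally show ?thesis
    by (simp only: card_bounded_partitions_containing)
qed

definition bounded_partition_fps :: "nat \<Rightarrow> int fps" where
  "bounded_partition_fps N = Abs_fps (\<lambda>m. int (card (bounded_partitions N m)))"

lemma bounded_partition_fps_mult_q_pochhammer:
  "bounded_partition_fps N * q_pochhammer fps_X N = 1"
proof (induction N)
  case 0
  show ?case
    by (auto simp: fps_eq_iff bounded_partition_fps_def bounded_partitions_0)
next
  case (Suc N)
  have "bounded_partition_fps (Suc N) = bounded_partition_fps N + fps_X ^ Suc N * bounded_partition_fps (Suc N)"
  proof (rule fps_ext)
    fix m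
    show "bounded_partition_fps (Suc N) $ m
        = (bounded_partition_fps N + fps_X ^ Suc N * bounded_partition_fps (Suc N)) $ m"
      unfolding bounded_partition_fps_def fps_add_nth fps_X_power_mult_nth
      by (subst card_bounded_partitions_Suc) simp
  qed
  then have step: "bounded_partition_fps (Suc N) * (1 - fps_X ^ Suc N) = bounded_partition_fps N"
    by (simp add: algebra_simps)
  have "bounded_partition_fps (Suc N) * q_pochhammer fps_X (Suc N)
      = bounded_partition_fps (Suc N) * (1 - fps_X ^ Suc N) * q_pochhammer fps_X N"
    by (simp only: q_pochhammer_Suc ac_simps)
  then show ?case
    by (simp only: step Suc.IH)
qed

definition partition_fps :: "int fps" where
  "partition_fps = Abs_fps (\<lambda>m. int (p (int m)))"

lemma partition_fps_eq_upto_bounded: "m \<le> N \<Longrightarrow> partition_fps \<simeq>[m] bounded_partition_fps N"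
  by (simp add: fps_eq_upto_def partition_fps_def bounded_partition_fps_def p_def
      bounded_partitions_eq_partitions_of)

lemma partition_fps_mult_q_pochhammer:
  assumes "m \<le> N"
  shows "partition_fps * q_pochhammer fps_X N \<simeq>[m] 1"
proof -
  have "partition_fps * q_pochhammer fps_X N \<simeq>[m] bounded_partition_fps N * q_pochhammer fps_X N"
    using assms by (intro fps_eq_upto_mult partition_fps_eq_upto_bounded fps_eq_upto_refl)
  then show ?thesis
    by (simp add: bounded_partition_fps_mult_q_pochhammer)
qed

lemma gauss_binomial_fps_X_eq_upto:
  assumes "k \<le> N" "m \<le> k" "m \<le> N - k"
  shows "gauss_binomial fps_X N k \<simeq>[m] partition_fps"
proof -
  let ?G = "gauss_binomial fps_X N k" and ?P = partition_fps and ?E = "q_pochhammer fps_X"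
  have "?G * 1 * 1 \<simeq>[m] ?G * (?P * ?E k) * (?P * ?E (N - k))"
    using assms by (intro fps_eq_upto_mult fps_eq_upto_refl fps_eq_upto_sym[OF partition_fps_mult_q_pochhammer])
  then have "?G \<simeq>[m] ?G * (?P * ?E k) * (?P * ?E (N - k))"
    by simp
  also have "?G * (?P * ?E k) * (?P * ?E (N - k)) = ?P * (?P * (?G * ?E k * ?E (N - k)))"
    by (simp add: ac_simps)
  also have "\<dots> = ?P * (?P * ?E N)"
    using assms(1) by (simp add: gauss_binomial_mult_q_pochhammer)
  also have "\<dots> \<simeq>[m] ?P * 1"
    using assms by (intro fps_eq_upto_mult partition_fps_mult_q_pochhammer) simp_all
  finally show ?thesis
    by simp
qed

section \<open>Gauss's identity\<close>

lemma sum_triangular_eq_upto: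
  assumes "m \<le> M" "\<And>k. k \<le> m \<Longrightarrow> a k \<simeq>[m] partition_fps"
  shows "(\<Sum>k\<le>M. fps_X ^ (Suc k choose 2) * a k)
    \<simeq>[m] partition_fps * (\<Sum>k\<le>m. fps_X ^ (Suc k choose 2))"
proof -
  have "(\<Sum>k\<le>M. fps_X ^ (Suc k choose 2) * a k) \<simeq>[m] (\<Sum>k\<le>M. fps_X ^ (Suc k choose 2) * partition_fps)"
    using assms(2) le_Suc_choose_two order.trans
    by (intro fps_eq_upto_sum fps_eq_upto_fps_X_power_mult) blast
  also have "\<dots> \<simeq>[m] (\<Sum>k\<le>m. fps_X ^ (Suc k choose 2) * partition_fps)"
  proof (rule fps_eq_upto_sum_subset)
    fix k assume "k \<in> {..M} - {..m}"
    then have "m < Suc k choose 2"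
      using le_Suc_choose_two[of k] by simp
    then show "fps_X ^ (Suc k choose 2) * partition_fps \<simeq>[m] 0"
      by (rule fps_X_power_mult_eq_upto_0)
  qed (use assms(1) in auto)
  finally show ?thesis
    by (simp add: sum_distrib_left mult.commute)
qed

lemma neg_q_pochhammer_eq_upto:
  assumes "m \<le> N"
  shows "neg_q_pochhammer (fps_X :: 'a::comm_ring_1 fps) N \<simeq>[m] neg_q_pochhammer fps_X m"
  unfolding neg_q_pochhammer_def
proof (rule fps_eq_upto_prod_subset)
  fix j assume "j \<in> {1..N} - {1..m}"
  then have "fps_X ^ j * 1 \<simeq>[m] (0 :: 'a fps)"
    by (intro fps_X_power_mult_eq_upto_0) auto
  then show "1 + fps_X ^ j \<simeq>[m] (1 :: 'a fps)"
    using fps_eq_upto_add[OF fps_eq_upto_refl] by fastforce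
qed (use assms in auto)

lemma prod_one_plus_power_lessThan_Suc:
  fixes q :: "'a::comm_ring_1"
  shows "(\<Prod>i<Suc n. 1 + q ^ i) = 2 * neg_q_pochhammer q n"
  by (simp add: neg_q_pochhammer_def prod.lessThan_Suc_shift prod.atLeast1_atMost_eq del: prod.lessThan_Suc)

lemma gauss_identity_eq_upto:
  "neg_q_pochhammer fps_X m * neg_q_pochhammer fps_X m
     \<simeq>[m] partition_fps * (\<Sum>k\<le>m. fps_X ^ (Suc k choose 2))"
  (is "?D * ?D \<simeq>[m] ?PT")
proof -
  \<comment> \<open>For this n the product over i < n has the factor 1 + q^0 = 2, and every Gaussian
    binomial coefficient that meets a triangular exponent at most m has both indices at least m.\<close>
  define n where "n = Suc (2 * m)"
  have "fps_const 2 * (?D * ?D) = ?D * (2 * ?D)"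
    by (simp add: numeral_fps_const)
  also have "?D * (2 * ?D) \<simeq>[m] neg_q_pochhammer fps_X n * (2 * neg_q_pochhammer fps_X (2 * m))"
    unfolding n_def
    by (intro fps_eq_upto_mult fps_eq_upto_refl fps_eq_upto_sym[OF neg_q_pochhammer_eq_upto]) simp_all
  also have "\<dots> = neg_q_pochhammer fps_X n * (\<Prod>i<n. 1 + fps_X ^ i)"
    by (simp only: n_def prod_one_plus_power_lessThan_Suc)
  also have "\<dots> = (\<Sum>k\<le>n. fps_X ^ (Suc k choose 2) * gauss_binomial fps_X (2 * n) (n - k))
      + (\<Sum>k\<le>2 * m. fps_X ^ (Suc k choose 2) * gauss_binomial fps_X (2 * n) (Suc (n + k)))"
    by (simp only: jacobi_triple_product_finite) (simp only: n_def lessThan_Suc_atMost)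
  also have "\<dots> \<simeq>[m] ?PT + ?PT"
    by (intro fps_eq_upto_add sum_triangular_eq_upto gauss_binomial_fps_X_eq_upto) (simp_all add: n_def)
  also have "?PT + ?PT = fps_const 2 * ?PT"
    by (simp add: numeral_fps_const mult_2)
  finally show ?thesis
    by (rule fps_eq_upto_cancel_const[rotated]) simp
qed

lemma dilated_partition_fps_mult_q_pochhammer:
  "(partition_fps oo fps_X ^ 2) * (q_pochhammer fps_X m * neg_q_pochhammer fps_X m) \<simeq>[m] 1"
proof -
  have "q_pochhammer fps_X m * neg_q_pochhammer fps_X m = q_pochhammer (fps_X :: int fps) m oo fps_X ^ 2"
    by (simp add: q_pochhammer_mult_neg_q_pochhammer q_pochhammer_fps_compose[of "fps_X ^ 2"])
  moreover have "(partition_fps * q_pochhammer fps_X m) oo fps_X ^ 2 \<simeq>[m] 1 oo fps_X ^ 2"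
    by (intro fps_eq_upto_compose_fps_X_power partition_fps_mult_q_pochhammer) simp_all
  ultimately show ?thesis
    by (simp add: fps_compose_mult_distrib)
qed

lemma partition_fps_eq_upto_triangular:
  "partition_fps \<simeq>[m] (\<Sum>k\<le>m. fps_X ^ (Suc k choose 2)) * ((partition_fps * partition_fps) oo fps_X ^ 2)"
proof -
  let ?P = partition_fps and ?Q = "partition_fps oo fps_X ^ 2"
  let ?D = "neg_q_pochhammer (fps_X :: int fps) m" and ?E = "q_pochhammer (fps_X :: int fps) m"
  let ?T = "\<Sum>k\<le>m. fps_X ^ (Suc k choose 2) :: int fps"
  have inv_P: "?P * ?E \<simeq>[m] 1"
    by (rule partition_fps_mult_q_pochhammer) simp
  have inv_Q: "?Q * (?E * ?D) \<simeq>[m] 1"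
    by (rule dilated_partition_fps_mult_q_pochhammer)
  have "?T * (?Q * ?Q) * 1 \<simeq>[m] ?T * (?Q * ?Q) * (?P * ?E)"
    by (intro fps_eq_upto_mult fps_eq_upto_refl fps_eq_upto_sym[OF inv_P])
  also have "?T * (?Q * ?Q) * (?P * ?E) = ?E * (?P * ?T) * ?Q * ?Q"
    by (simp add: ac_simps)
  also have "\<dots> \<simeq>[m] ?E * (?D * ?D) * ?Q * ?Q"
    by (intro fps_eq_upto_mult fps_eq_upto_refl fps_eq_upto_sym[OF gauss_identity_eq_upto])
  also have "\<dots> = ?Q * (?E * ?D) * (?D * ?Q)"
    by (simp add: ac_simps)
  also have "\<dots> \<simeq>[m] 1 * (?D * ?Q)"
    by (intro fps_eq_upto_mult fps_eq_upto_refl inv_Q)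
  also have "\<dots> = ?D * ?Q * 1"
    by simp
  also have "\<dots> \<simeq>[m] ?D * ?Q * (?P * ?E)"
    by (intro fps_eq_upto_mult fps_eq_upto_refl fps_eq_upto_sym[OF inv_P])
  also have "\<dots> = ?P * (?Q * (?E * ?D))"
    by (simp add: ac_simps)
  also have "\<dots> \<simeq>[m] ?P * 1"
    by (intro fps_eq_upto_mult fps_eq_upto_refl inv_Q)
  finally show ?thesis
    by (simp add: fps_compose_mult_distrib fps_eq_upto_sym)
qed

section \<open>Comparing coefficients\<close>

definition p2_half :: "int \<Rightarrow> int" where
  "p2_half d = (if even d then int (p2 (d div 2)) else 0)"

lemma p2_half_neg: "d < 0 \<Longrightarrow> p2_half d = 0"
  by (simp add: p2_half_def p2_def)

lemma partition_fps_square_nth: "(partition_fps * partition_fps) $ e = int (p2 (int e))"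
proof -
  have "(partition_fps * partition_fps) $ e = (\<Sum>i=0..e. int (p (int i)) * int (p (int e - int i)))"
    by (auto simp: fps_mult_nth partition_fps_def intro!: sum.cong)
  then show ?thesis
    by (simp add: p2_def)
qed

lemma fps_X_power_mult_square_dilated_nth:
  "(fps_X ^ t * ((partition_fps * partition_fps) oo fps_X ^ 2)) $ m = p2_half (int m - int t)"
proof (cases "t \<le> m")
  case True
  then have diff: "int (m - t) = int m - int t"
    by simp
  have "(fps_X ^ t * ((partition_fps * partition_fps) oo fps_X ^ 2)) $ m
      = ((partition_fps * partition_fps) oo fps_X ^ 2) $ (m - t)"
    using True by (simp add: fps_X_power_mult_nth)
  also have "\<dots> = (if even (m - t) then int (p2 (int ((m - t) div 2))) else 0)"
    by (simp add: fps_compose_fps_X_power_nth partition_fps_square_nth)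
  also have "\<dots> = p2_half (int m - int t)"
    unfolding p2_half_def zdiv_int diff[symmetric] by simp
  finally show ?thesis .
qed (simp add: fps_X_power_mult_nth p2_half_neg)

lemma p_eq_sum_triangular:
  assumes "m \<le> M"
  shows "int (p (int m)) = (\<Sum>k\<le>M. p2_half (int m - int (Suc k choose 2)))"
proof -
  have "int (p (int m)) = partition_fps $ m"
    by (simp add: partition_fps_def)
  also have "\<dots> = ((\<Sum>k\<le>m. fps_X ^ (Suc k choose 2)) * ((partition_fps * partition_fps) oo fps_X ^ 2)) $ m"
    using partition_fps_eq_upto_triangular[of m] by (simp add: fps_eq_upto_def)
  also have "\<dots> = (\<Sum>k\<le>m. p2_half (int m - int (Suc k choose 2)))"
    by (simp add: sum_distrib_right fps_sum_nth fps_X_power_mult_square_dilated_nth)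
  also have "\<dots> = (\<Sum>k\<le>M. p2_half (int m - int (Suc k choose 2)))"
  proof (rule sum.mono_neutral_left)
    show "\<forall>k\<in>{..M} - {..m}. p2_half (int m - int (Suc k choose 2)) = 0"
    proof (intro ballI p2_half_neg)
      fix k assume "k \<in> {..M} - {..m}"
      then show "int m - int (Suc k choose 2) < 0"
        using le_Suc_choose_two[of k] by simp
    qed
  qed (use assms in auto)
  finally show ?thesis .
qed

lemma te_Suc: "te (Suc i) = int (if even i then Suc (2 * i) choose 2 else Suc (Suc (2 * i)) choose 2)"
proof -
  have "te (Suc i) = ((2 * int i + 1) * (2 * int i + 1 - (-1) ^ i)) div 2"
    by (simp add: te_def algebra_simps)
  also have "\<dots> = (if even i then int i * (2 * int i + 1) else (2 * int i + 1) * (int i + 1))"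
    by (auto simp: algebra_simps)
  finally show ?thesis
    unfolding Suc_double_choose_two Suc_Suc_double_choose_two by (simp add: algebra_simps)
qed

lemma to_Suc: "to (Suc i) = int (if even i then Suc (Suc (2 * i)) choose 2 else Suc (2 * i) choose 2)"
proof -
  have "to (Suc i) = ((2 * int i + 1) * (2 * int i + 1 + (-1) ^ i)) div 2"
    by (simp add: to_def algebra_simps)
  also have "\<dots> = (if even i then (2 * int i + 1) * (int i + 1) else int i * (2 * int i + 1))"
    by (auto simp: algebra_simps)
  finally show ?thesis
    unfolding Suc_double_choose_two Suc_Suc_double_choose_two by (simp add: algebra_simps)
qed

lemma p_eq_sum_te_to:
  "int (p (int m)) = (\<Sum>i\<le>m. p2_half (int m - te (Suc i)) + p2_half (int m - to (Suc i)))"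
proof -
  have "int (p (int m)) = (\<Sum>k\<le>Suc (2 * m). p2_half (int m - int (Suc k choose 2)))"
    by (rule p_eq_sum_triangular) simp
  also have "\<dots> = (\<Sum>i\<le>m. p2_half (int m - int (Suc (2 * i) choose 2))
      + p2_half (int m - int (Suc (Suc (2 * i)) choose 2)))"
    by (rule sum.in_pairs_0)
  also have "\<dots> = (\<Sum>i\<le>m. p2_half (int m - te (Suc i)) + p2_half (int m - to (Suc i)))"
    by (intro sum.cong refl) (simp add: te_Suc to_Suc)
  finally show ?thesis .
qed

lemma even_te_Suc: "even (te (Suc i))"
  by (simp add: te_Suc Suc_double_choose_two Suc_Suc_double_choose_two)

lemma odd_to_Suc: "odd (to (Suc i))"
  by (simp add: to_Suc Suc_double_choose_two Suc_Suc_double_choose_two)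

lemma te_lower_bound: "1 \<le> i \<Longrightarrow> int i - 1 \<le> te i"
  using le_Suc_choose_two[of "2 * (i - 1)"] le_Suc_choose_two[of "Suc (2 * (i - 1))"]
  by (cases i) (auto simp: te_Suc)

lemma to_lower_bound: "1 \<le> i \<Longrightarrow> int i - 1 \<le> to i"
  using le_Suc_choose_two[of "2 * (i - 1)"] le_Suc_choose_two[of "Suc (2 * (i - 1))"]
  by (cases i) (auto simp: to_Suc)

lemma sum_p2_half_pairs:
  fixes v w :: "nat \<Rightarrow> int"
  assumes even: "\<And>i. even (int m - v (Suc i))" and odd: "\<And>i. odd (int m - w (Suc i))"
    and bound: "\<And>i. 1 \<le> i \<Longrightarrow> int i - 1 \<le> v i"
  shows "(\<Sum>i\<le>m. p2_half (int m - v (Suc i)) + p2_half (int m - w (Suc i)))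
    = (\<Sum>i | 1 \<le> i \<and> v i \<le> int m. int (p2 ((int m - v i) div 2)))"
proof -
  have "{i. 1 \<le> i \<and> v i \<le> int m} = Suc ` {i \<in> {..m}. v (Suc i) \<le> int m}"
  proof (intro equalityI subsetI)
    fix i assume "i \<in> {i. 1 \<le> i \<and> v i \<le> int m}"
    moreover from this obtain j where "i = Suc j"
      by (cases i) auto
    ultimately show "i \<in> Suc ` {i \<in> {..m}. v (Suc i) \<le> int m}"
      using bound[of i] by auto
  qed auto
  then have "(\<Sum>i | 1 \<le> i \<and> v i \<le> int m. int (p2 ((int m - v i) div 2)))
      = (\<Sum>i\<in>{i \<in> {..m}. v (Suc i) \<le> int m}. int (p2 ((int m - v (Suc i)) div 2)))"
    by (simp add: sum.reindex)
  also have "\<dots> = (\<Sum>i\<le>m. if v (Suc i) \<le> int m then int (p2 ((int m - v (Suc i)) div 2)) else 0)"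
    by (rule sum.inter_filter) simp
  also have "\<dots> = (\<Sum>i\<le>m. p2_half (int m - v (Suc i)) + p2_half (int m - w (Suc i)))"
  proof (intro sum.cong refl)
    fix i
    show "(if v (Suc i) \<le> int m then int (p2 ((int m - v (Suc i)) div 2)) else 0)
        = p2_half (int m - v (Suc i)) + p2_half (int m - w (Suc i))"
      using even[of i] odd[of i] by (simp add: p2_half_def p2_def pos_imp_zdiv_neg_iff)
  qed
  finally show ?thesis ..
qed

theorem theorem5:
  fixes n :: int
  shows "(even n \<longrightarrow> int (p n) = (\<Sum>i | 1 \<le> i \<and> te i \<le> n. int (p2 ((n - te i) div 2))))
       \<and> (odd n \<longrightarrow> int (p n) = (\<Sum>i | 1 \<le> i \<and> to i \<le> n. int (p2 ((n - to i) div 2))))"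
proof (cases "n < 0")
  case True
  then have empty: "{i. 1 \<le> i \<and> te i \<le> n} = {}" "{i. 1 \<le> i \<and> to i \<le> n} = {}"
    using te_lower_bound to_lower_bound by force+
  show ?thesis
    unfolding empty using True by (simp add: p_def)
next
  case False
  then obtain m where n: "n = int m"
    by (metis nonneg_int_cases not_less)
  have "int (p n) = (\<Sum>i | 1 \<le> i \<and> te i \<le> n. int (p2 ((n - te i) div 2)))" if "even n"
    unfolding n p_eq_sum_te_to
    by (rule sum_p2_half_pairs) (use that in \<open>simp_all add: n even_te_Suc odd_to_Suc te_lower_bound\<close>)
  moreover have "int (p n) = (\<Sum>i | 1 \<le> i \<and> to i \<le> n. int (p2 ((n - to i) div 2)))" if "odd n"
    unfolding n p_eq_sum_te_to add.commute[of "p2_half (int m - te _)"]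
    by (rule sum_p2_half_pairs) (use that in \<open>simp_all add: n even_te_Suc odd_to_Suc to_lower_bound\<close>)
  ultimately show ?thesis
    by blast
qed

end
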